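(* Let $A$ be a finite set, $n\in\mathbb N$, $\nu\in\Pr(A)$, $\mu\in\Pr(A^n)$, and $\delta:=\overline{d_n}(\mu,\nu^{\times n})$. Then $\mathrm{TC}(\mu)\le2\big(\mathrm H(\delta,1-\delta)+\delta\log|A|\big)n$.
   Context: $\overline{d_n}$ is the transportation metric on $\Pr(A^n)$ associated with the normalized Hamming metric $d_n(\mathbf a,\mathbf a')=|\{i:a_i\ne a'_i\}|/n$: $\overline{d_n}(\mu,\nu)=\inf\{\int d_n\,d\lambda:\lambda\text{ a coupling of }\mu,\nu\}$. $\mathrm{TC}(\mu)=\sum_i\mathrm H(\mu_{\{i\}})-\mathrm H(\mu)$ with $\mu_{\{i\}}$ the marginals; $\mathrm H(\delta,1-\delta)$ is the binary Shannon entropy; logarithms are natural. *)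

theory Defs
  imports "HOL-Analysis.Analysis"
begin

text \<open>A^n is represented as the set of lists of length n over the finite type 'a.\<close>
definition words :: "nat \<Rightarrow> 'a list set" where
  "words n = {xs. length xs = n}"

definition is_dist :: "'b set \<Rightarrow> ('b \<Rightarrow> real) \<Rightarrow> bool" where
  "is_dist S p \<longleftrightarrow> (\<forall>x\<in>S. p x \<ge> 0) \<and> (\<Sum>x\<in>S. p x) = 1"

definition hamming :: "nat \<Rightarrow> 'a list \<Rightarrow> 'a list \<Rightarrow> real" where
  "hamming n xs ys = real (card {i. i < n \<and> xs ! i \<noteq> ys ! i}) / real n"

definition coupling :: "nat \<Rightarrow> ('a list \<Rightarrow> real) \<Rightarrow> ('a list \<Rightarrow> real)
    \<Rightarrow> ('a list \<times> 'a list \<Rightarrow> real) \<Rightarrow> bool" where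
  "coupling n mu nu lam \<longleftrightarrow> is_dist (words n \<times> words n) lam
     \<and> (\<forall>xs\<in>words n. (\<Sum>ys\<in>words n. lam (xs, ys)) = mu xs)
     \<and> (\<forall>ys\<in>words n. (\<Sum>xs\<in>words n. lam (xs, ys)) = nu ys)"

definition dbar :: "nat \<Rightarrow> ('a list \<Rightarrow> real) \<Rightarrow> ('a list \<Rightarrow> real) \<Rightarrow> real" where
  "dbar n mu nu = Inf {(\<Sum>p\<in>words n \<times> words n. lam p * hamming n (fst p) (snd p)) | lam.
                        coupling n mu nu lam}"

text \<open>Shannon entropy (natural log; ln 0 = 0 in Isabelle so 0 ln 0 = 0).\<close>
definition entropy :: "'b set \<Rightarrow> ('b \<Rightarrow> real) \<Rightarrow> real" where
  "entropy S p = - (\<Sum>x\<in>S. p x * ln (p x))"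

definition marginal :: "nat \<Rightarrow> ('a list \<Rightarrow> real) \<Rightarrow> nat \<Rightarrow> 'a \<Rightarrow> real" where
  "marginal n mu i a = (\<Sum>xs\<in>{xs\<in>words n. xs ! i = a}. mu xs)"

definition total_correlation :: "nat \<Rightarrow> ('a::finite list \<Rightarrow> real) \<Rightarrow> real" where
  "total_correlation n mu = (\<Sum>i<n. entropy UNIV (marginal n mu i)) - entropy (words n) mu"

definition iid_power :: "nat \<Rightarrow> ('a \<Rightarrow> real) \<Rightarrow> 'a list \<Rightarrow> real" where
  "iid_power n nu xs = (\<Prod>i<n. nu (xs ! i))"

definition binary_entropy :: "real \<Rightarrow> real" where
  "binary_entropy d = - d * ln d - (1 - d) * ln (1 - d)"

end

theory Submission
  imports Defs "HOL-Real_Asymp.Real_Asymp"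
begin

text \<open>Let \<open>\<lambda>\<close> be a coupling of \<open>\<mu>\<close> and \<open>\<nu>\<^sup>n\<close> with expected normalised Hamming
  distance \<open>c\<close>, and let \<open>r(a,b)\<close> be \<open>1 - c\<close> for \<open>a = b\<close> and \<open>c/|A|\<close> otherwise, a
  subprobability kernel on \<open>A\<close>. Gibbs' inequality, applied along \<open>\<lambda>\<close>, gives
  \<open>H(\<mu>\<^sub>i) \<le> H(\<nu>) + E[-ln r(x\<^sub>i,y\<^sub>i)]\<close> for each coordinate and
  \<open>H(\<nu>\<^sup>n) \<le> H(\<mu>) + E[-\<Sum>\<^sub>i ln r(x\<^sub>i,y\<^sub>i)]\<close> for the whole word, and the latter expectation
  is exactly \<open>n (H(c,1-c) + c ln |A|)\<close>. As \<open>H(\<nu>\<^sup>n) = n H(\<nu>)\<close>, the two bounds add up to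
  \<open>TC(\<mu>) \<le> 2n (H(c,1-c) + c ln |A|)\<close>. The right-hand side is continuous in \<open>c \<in> [0,1]\<close>, so the
  bound survives passing to the infimum over couplings, which is \<open>\<delta>\<close>.\<close>

lemma finite_words [simp]: "finite (words n :: 'a::finite list set)"
proof -
  have "finite {xs. set xs \<subseteq> (UNIV :: 'a set) \<and> length xs = n}"
    by (rule finite_lists_length_eq) simp
  then show ?thesis
    unfolding words_def by simp
qed

lemma words_Suc: "words (Suc n) = (\<lambda>(a, ys). a # ys) ` (UNIV \<times> words n)"
  unfolding words_def by (auto simp: length_Suc_conv image_iff)

lemma sum_words_prod:
  fixes f :: "nat \<Rightarrow> 'a::finite \<Rightarrow> 'b::comm_semiring_1"
  shows "(\<Sum>ys\<in>words n. \<Prod>j<n. f j (ys ! j)) = (\<Prod>j<n. \<Sum>a\<in>UNIV. f j a)"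
proof (induction n arbitrary: f)
  case 0
  then show ?case by (simp add: words_def)
next
  case (Suc n)
  have inj: "inj_on (\<lambda>(a, ys). a # ys) (UNIV \<times> words n)"
    by (auto simp: inj_on_def)
  have "(\<Sum>ys\<in>words (Suc n). \<Prod>j<Suc n. f j (ys ! j))
      = (\<Sum>p\<in>UNIV \<times> words n. f 0 (fst p) * (\<Prod>j<n. f (Suc j) (snd p ! j)))"
    unfolding words_Suc sum.reindex[OF inj]
    by (simp only: comp_def case_prod_beta prod.lessThan_Suc_shift nth_Cons_0 nth_Cons_Suc)
  also have "\<dots> = (\<Sum>a\<in>UNIV. f 0 a) * (\<Prod>j<n. \<Sum>a\<in>UNIV. f (Suc j) a)"
    using Suc[of "\<lambda>j. f (Suc j)"]
    by (simp add: sum.cartesian_product' sum_distrib_left[symmetric] sum_distrib_right)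
  also have "\<dots> = (\<Prod>j<Suc n. \<Sum>a\<in>UNIV. f j a)"
    by (simp only: prod.lessThan_Suc_shift)
  finally show ?case .
qed

lemma sum_pushforward:
  fixes lam :: "'w \<Rightarrow> real" and beta :: "'t \<Rightarrow> real"
  assumes "finite \<Omega>" "finite T" "Y ` \<Omega> \<subseteq> T"
    and "\<And>t. t \<in> T \<Longrightarrow> beta t = (\<Sum>w\<in>{w\<in>\<Omega>. Y w = t}. lam w)"
  shows "(\<Sum>t\<in>T. beta t * f t) = (\<Sum>w\<in>\<Omega>. lam w * f (Y w))"
proof -
  have "(\<Sum>t\<in>T. beta t * f t) = (\<Sum>t\<in>T. \<Sum>w\<in>{w\<in>\<Omega>. Y w = t}. lam w * f (Y w))"
    using assms(4) by (auto simp: sum_distrib_right intro!: sum.cong)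
  also have "\<dots> = (\<Sum>w\<in>\<Omega>. lam w * f (Y w))"
    by (rule sum.group[OF assms(1-3)])
  finally show ?thesis .
qed

lemma entropy_pushforward:
  fixes lam :: "'w \<Rightarrow> real" and beta :: "'t \<Rightarrow> real"
  assumes "finite \<Omega>" "finite T" "Y ` \<Omega> \<subseteq> T"
    and "\<And>t. t \<in> T \<Longrightarrow> beta t = (\<Sum>w\<in>{w\<in>\<Omega>. Y w = t}. lam w)"
  shows "entropy T beta = - (\<Sum>w\<in>\<Omega>. lam w * ln (beta (Y w)))"
  unfolding entropy_def using sum_pushforward[OF assms, of "\<lambda>t. ln (beta t)"] by simp

lemma gibbs_inequality:
  fixes p r :: "'b \<Rightarrow> real"
  assumes "finite P" and p_nonneg: "\<And>x. x \<in> P \<Longrightarrow> 0 \<le> p x" and p_sum: "sum p P = 1"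
    and r_nonneg: "\<And>x. x \<in> P \<Longrightarrow> 0 \<le> r x" and r_sum: "sum r P \<le> 1"
    and r_pos: "\<And>x. x \<in> P \<Longrightarrow> 0 < p x \<Longrightarrow> 0 < r x"
  shows "entropy P p \<le> - (\<Sum>x\<in>P. p x * ln (r x))"
proof -
  have "p x * ln (r x) - p x * ln (p x) \<le> r x - p x" if "x \<in> P" for x
  proof (cases "p x = 0")
    case True
    then show ?thesis using r_nonneg[OF that] by simp
  next
    case False
    then have p: "0 < p x" and r: "0 < r x"
      using p_nonneg[OF that] r_pos[OF that] by auto
    have "ln (r x / p x) \<le> r x / p x - 1"
      using p r by (intro ln_le_minus_one) simp
    then have "p x * ln (r x / p x) \<le> p x * (r x / p x - 1)"
      using p by (intro mult_left_mono) auto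
    then show ?thesis using p r by (simp add: ln_div algebra_simps)
  qed
  then have "(\<Sum>x\<in>P. p x * ln (r x) - p x * ln (p x)) \<le> (\<Sum>x\<in>P. r x - p x)"
    by (rule sum_mono)
  then show ?thesis
    using p_sum r_sum unfolding entropy_def by (simp add: sum_subtractf)
qed

lemma entropy_le_entropy_joint:
  fixes lam :: "'w \<Rightarrow> real" and X :: "'w \<Rightarrow> 's" and Y :: "'w \<Rightarrow> 't"
  assumes fin: "finite \<Omega>" "finite S" "finite T" and XS: "X ` \<Omega> \<subseteq> S" and YT: "Y ` \<Omega> \<subseteq> T"
    and lam_nonneg: "\<And>w. w \<in> \<Omega> \<Longrightarrow> 0 \<le> lam w"
    and beta: "\<And>t. t \<in> T \<Longrightarrow> beta t = (\<Sum>w\<in>{w\<in>\<Omega>. Y w = t}. lam w)"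
  shows "entropy T beta \<le> entropy (S \<times> T) (\<lambda>z. \<Sum>w\<in>{w\<in>\<Omega>. (X w, Y w) = z}. lam w)"
    (is "_ \<le> entropy _ ?G")
proof -
  have "lam w * ln (?G (X w, Y w)) \<le> lam w * ln (beta (Y w))" if w: "w \<in> \<Omega>" for w
  proof (cases "lam w = 0")
    case False
    then have "0 < lam w"
      using lam_nonneg[OF w] by simp
    moreover have "lam w \<le> ?G (X w, Y w)"
      by (rule member_le_sum) (use w lam_nonneg fin in auto)
    moreover have "?G (X w, Y w) \<le> beta (Y w)"
      unfolding beta[OF YT[THEN subsetD, OF imageI[OF w]]]
      by (rule sum_mono2) (use fin lam_nonneg in auto)
    ultimately show ?thesis
      by (intro mult_left_mono) auto
  qed simp
  then have "- (\<Sum>w\<in>\<Omega>. lam w * ln (beta (Y w))) \<le> - (\<Sum>w\<in>\<Omega>. lam w * ln (?G (X w, Y w)))"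
    by (simp add: sum_mono)
  moreover have "entropy (S \<times> T) ?G = - (\<Sum>w\<in>\<Omega>. lam w * ln (?G (X w, Y w)))"
    by (rule entropy_pushforward) (use fin XS YT in auto)
  ultimately show ?thesis
    using entropy_pushforward[OF fin(1,3) YT beta] by simp
qed

text \<open>Gibbs' inequality against the subprobability \<open>\<alpha>(x) q(x,y)\<close> bounds the joint entropy
  \<open>H(X,Y)\<close>, and hence \<open>H(Y)\<close>, by \<open>H(X) + E[-ln q(X,Y)]\<close>.\<close>

lemma entropy_le_entropy_minus_log_kernel:
  fixes lam :: "'w \<Rightarrow> real" and X :: "'w \<Rightarrow> 's" and Y :: "'w \<Rightarrow> 't"
    and alpha :: "'s \<Rightarrow> real" and beta :: "'t \<Rightarrow> real" and q :: "'s \<Rightarrow> 't \<Rightarrow> real"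
  assumes fin: "finite \<Omega>" "finite S" "finite T" and XS: "X ` \<Omega> \<subseteq> S" and YT: "Y ` \<Omega> \<subseteq> T"
    and lam_nonneg: "\<And>w. w \<in> \<Omega> \<Longrightarrow> 0 \<le> lam w" and lam_sum: "sum lam \<Omega> = 1"
    and alpha: "\<And>s. s \<in> S \<Longrightarrow> alpha s = (\<Sum>w\<in>{w\<in>\<Omega>. X w = s}. lam w)"
    and beta: "\<And>t. t \<in> T \<Longrightarrow> beta t = (\<Sum>w\<in>{w\<in>\<Omega>. Y w = t}. lam w)"
    and q_nonneg: "\<And>s t. s \<in> S \<Longrightarrow> t \<in> T \<Longrightarrow> 0 \<le> q s t"
    and q_sum: "\<And>s. s \<in> S \<Longrightarrow> (\<Sum>t\<in>T. q s t) \<le> 1"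
    and q_pos: "\<And>w. w \<in> \<Omega> \<Longrightarrow> 0 < lam w \<Longrightarrow> 0 < q (X w) (Y w)"
  shows "entropy T beta \<le> entropy S alpha - (\<Sum>w\<in>\<Omega>. lam w * ln (q (X w) (Y w)))"
proof -
  define Z where "Z w = (X w, Y w)" for w
  define G where "G z = (\<Sum>w\<in>{w\<in>\<Omega>. Z w = z}. lam w)" for z
  define R where "R z = alpha (fst z) * q (fst z) (snd z)" for z
  have ZST: "Z ` \<Omega> \<subseteq> S \<times> T"
    using XS YT by (auto simp: Z_def)
  have lam_le_alpha: "lam w \<le> alpha (X w)" if "w \<in> \<Omega>" for w
    unfolding alpha[OF XS[THEN subsetD, OF imageI[OF that]]]
    by (rule member_le_sum) (use that lam_nonneg fin in auto)
  have alpha_nonneg: "0 \<le> alpha s" if "s \<in> S" for s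
    using lam_nonneg by (auto simp: alpha[OF that] intro: sum_nonneg)
  have "entropy T beta \<le> entropy (S \<times> T) G"
    unfolding G_def Z_def by (rule entropy_le_entropy_joint[OF fin XS YT lam_nonneg beta])
  also have "\<dots> \<le> - (\<Sum>z\<in>S \<times> T. G z * ln (R z))"
  proof (rule gibbs_inequality)
    show "0 \<le> G z" for z
      using lam_nonneg by (auto simp: G_def intro: sum_nonneg)
    show "sum G (S \<times> T) = 1"
      unfolding G_def lam_sum[symmetric] by (rule sum.group) (use fin ZST in auto)
    show "0 \<le> R z" if "z \<in> S \<times> T" for z
      using that alpha_nonneg q_nonneg by (auto simp: R_def)
    have "sum R (S \<times> T) = (\<Sum>s\<in>S. alpha s * (\<Sum>t\<in>T. q s t))"
      by (simp add: R_def sum.cartesian_product' sum_distrib_left)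
    also have "\<dots> \<le> sum alpha S"
      by (rule sum_mono) (use alpha_nonneg q_sum in \<open>auto intro: mult_left_le\<close>)
    also have "\<dots> = 1"
      unfolding lam_sum[symmetric] using alpha by (simp add: sum.group[OF fin(1,2) XS])
    finally show "sum R (S \<times> T) \<le> 1" .
    show "0 < R z" if "z \<in> S \<times> T" "0 < G z" for z
    proof -
      obtain w where w: "w \<in> \<Omega>" "Z w = z" "0 < lam w"
        using \<open>0 < G z\<close> unfolding G_def by (metis (mono_tags, lifting) mem_Collect_eq not_le sum_nonpos)
      show ?thesis
        using w lam_le_alpha[OF w(1)] q_pos[OF w(1,3)] by (auto simp: R_def Z_def)
    qed
  qed (use fin in auto)
  also have "(\<Sum>z\<in>S \<times> T. G z * ln (R z)) = (\<Sum>w\<in>\<Omega>. lam w * ln (R (Z w)))"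
    by (rule sum_pushforward[OF fin(1) _ ZST]) (use fin in \<open>auto simp: G_def\<close>)
  also have "\<dots> = (\<Sum>w\<in>\<Omega>. lam w * ln (alpha (X w))) + (\<Sum>w\<in>\<Omega>. lam w * ln (q (X w) (Y w)))"
  proof -
    have "lam w * ln (R (Z w)) = lam w * ln (alpha (X w)) + lam w * ln (q (X w) (Y w))"
      if w: "w \<in> \<Omega>" for w
    proof (cases "lam w = 0")
      case False
      then have "0 < lam w" using lam_nonneg[OF w] by simp
      then show ?thesis
        using lam_le_alpha[OF w] q_pos[OF w] by (simp add: R_def Z_def ln_mult distrib_left)
    qed simp
    then show ?thesis by (simp add: sum.distrib)
  qed
  finally show ?thesis
    using entropy_pushforward[OF fin(1,2) XS alpha] by simp
qed

lemma sum_iid_power: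
  fixes nu :: "'a::finite \<Rightarrow> real"
  assumes "is_dist UNIV nu"
  shows "(\<Sum>ys\<in>words n. iid_power n nu ys) = 1"
  using assms sum_words_prod[of "\<lambda>j. nu" n] unfolding iid_power_def is_dist_def by simp

lemma is_dist_iid_power:
  fixes nu :: "'a::finite \<Rightarrow> real"
  assumes "is_dist UNIV nu"
  shows "is_dist (words n) (iid_power n nu)"
  using assms sum_iid_power[OF assms] unfolding is_dist_def iid_power_def
  by (auto intro: prod_nonneg)

lemma marginal_iid_power:
  fixes nu :: "'a::finite \<Rightarrow> real"
  assumes nu: "is_dist UNIV nu" and i: "i < n"
  shows "marginal n (iid_power n nu) i a = nu a"
proof -
  define f where "f j b = (if j = i \<and> b \<noteq> a then 0 else nu b)" for j b
  have "marginal n (iid_power n nu) i a = (\<Sum>ys\<in>words n. if ys ! i = a then iid_power n nu ys else 0)"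
    unfolding marginal_def by (simp add: sum.inter_filter)
  also have "\<dots> = (\<Sum>ys\<in>words n. \<Prod>j<n. f j (ys ! j))"
  proof (rule sum.cong[OF refl])
    fix ys :: "'a list"
    show "(if ys ! i = a then iid_power n nu ys else 0) = (\<Prod>j<n. f j (ys ! j))"
    proof (cases "ys ! i = a")
      case False
      then have "f i (ys ! i) = 0" by (simp add: f_def)
      with False i show ?thesis by (auto intro: prod_zero)
    qed (auto simp: iid_power_def f_def intro!: prod.cong)
  qed
  also have "\<dots> = (\<Prod>j<n. \<Sum>b\<in>UNIV. f j b)"
    by (rule sum_words_prod)
  also have "\<dots> = (\<Prod>j<n. if j = i then nu a else 1)"
  proof (rule prod.cong[OF refl])
    fix j
    have "(\<Sum>b\<in>UNIV. f i b) = (\<Sum>b\<in>UNIV. if b = a then nu b else 0)"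
      unfolding f_def by (intro sum.cong) auto
    then show "(\<Sum>b\<in>UNIV. f j b) = (if j = i then nu a else 1)"
      using nu unfolding f_def is_dist_def by auto
  qed
  also have "\<dots> = nu a"
    using i by (simp add: prod.delta)
  finally show ?thesis .
qed

lemma entropy_iid_power:
  fixes nu :: "'a::finite \<Rightarrow> real"
  assumes nu: "is_dist UNIV nu"
  shows "entropy (words n) (iid_power n nu) = real n * entropy UNIV nu"
proof -
  let ?pi = "iid_power n nu"
  have "?pi ys * ln (?pi ys) = ?pi ys * (\<Sum>j<n. ln (nu (ys ! j)))" for ys
  proof (cases "?pi ys = 0")
    case False
    then show ?thesis
      unfolding iid_power_def by (subst ln_prod) auto
  qed simp
  then have "entropy (words n) ?pi = - (\<Sum>j<n. \<Sum>ys\<in>words n. ?pi ys * ln (nu (ys ! j)))"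
    unfolding entropy_def by (simp add: sum_distrib_left sum.swap[of _ "words n"])
  also have "\<dots> = (\<Sum>j<n. entropy UNIV nu)"
  proof -
    have "entropy UNIV nu = - (\<Sum>ys\<in>words n. ?pi ys * ln (nu (ys ! j)))" if "j < n" for j
      using marginal_iid_power[OF nu that]
      by (intro entropy_pushforward) (auto simp: marginal_def)
    then show ?thesis by (simp add: sum_negf)
  qed
  finally show ?thesis by simp
qed

lemma coupling_nonneg:
  "coupling n mu nu lam \<Longrightarrow> w \<in> words n \<times> words n \<Longrightarrow> 0 \<le> lam w"
  unfolding coupling_def is_dist_def by auto

lemma coupling_sum_eq_1:
  "coupling n mu nu lam \<Longrightarrow> sum lam (words n \<times> words n) = 1"
  unfolding coupling_def is_dist_def by auto

lemma coupling_sum_fst: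
  fixes lam :: "'a::finite list \<times> 'a list \<Rightarrow> real"
  assumes "coupling n mu nu lam"
  shows "(\<Sum>w\<in>{w\<in>words n \<times> words n. P (fst w)}. lam w) = (\<Sum>xs\<in>{xs\<in>words n. P xs}. mu xs)"
proof -
  have fibres: "{w\<in>words n \<times> words n. P (fst w)} = {xs\<in>words n. P xs} \<times> words n"
    by auto
  have "(\<Sum>w\<in>{w\<in>words n \<times> words n. P (fst w)}. lam w)
      = (\<Sum>xs\<in>{xs\<in>words n. P xs}. \<Sum>ys\<in>words n. lam (xs, ys))"
    unfolding fibres by (rule sum.cartesian_product')
  also have "\<dots> = (\<Sum>xs\<in>{xs\<in>words n. P xs}. mu xs)"
    using assms unfolding coupling_def by (auto intro: sum.cong)
  finally show ?thesis .
qed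

lemma coupling_sum_snd:
  fixes lam :: "'a::finite list \<times> 'a list \<Rightarrow> real"
  assumes "coupling n mu nu lam"
  shows "(\<Sum>w\<in>{w\<in>words n \<times> words n. P (snd w)}. lam w) = (\<Sum>ys\<in>{ys\<in>words n. P ys}. nu ys)"
proof -
  have fibres: "{w\<in>words n \<times> words n. P (snd w)} = words n \<times> {ys\<in>words n. P ys}"
    by auto
  have "(\<Sum>w\<in>{w\<in>words n \<times> words n. P (snd w)}. lam w)
      = (\<Sum>ys\<in>{ys\<in>words n. P ys}. \<Sum>xs\<in>words n. lam (xs, ys))"
    unfolding fibres sum.cartesian_product' by (rule sum.swap)
  also have "\<dots> = (\<Sum>ys\<in>{ys\<in>words n. P ys}. nu ys)"
    using assms unfolding coupling_def by (auto intro: sum.cong)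
  finally show ?thesis .
qed

lemma coupling_product:
  assumes "is_dist (words n) mu" and "is_dist (words n) nu"
  shows "coupling n mu nu (\<lambda>w. mu (fst w) * nu (snd w))"
  using assms unfolding coupling_def is_dist_def
  by (simp add: sum.cartesian_product' sum_product sum_distrib_left[symmetric]
      sum_distrib_right[symmetric])

definition transport_cost :: "nat \<Rightarrow> ('a list \<times> 'a list \<Rightarrow> real) \<Rightarrow> real" where
  "transport_cost n lam = (\<Sum>w\<in>words n \<times> words n. lam w * hamming n (fst w) (snd w))"

lemma hamming_nonneg: "0 \<le> hamming n xs ys"
  unfolding hamming_def by simp

lemma hamming_le_1: "hamming n xs ys \<le> 1"
proof -
  have "card {i. i < n \<and> xs ! i \<noteq> ys ! i} \<le> card {..<n}"
    by (rule card_mono) auto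
  then show ?thesis
    unfolding hamming_def by (cases "n = 0") auto
qed

lemma hamming_pos:
  assumes "i < n" and "xs ! i \<noteq> ys ! i"
  shows "0 < hamming n xs ys"
proof -
  have "i \<in> {i. i < n \<and> xs ! i \<noteq> ys ! i}"
    using assms by simp
  then have "0 < card {i. i < n \<and> xs ! i \<noteq> ys ! i}"
    by (auto simp: card_gt_0_iff)
  then show ?thesis
    using assms unfolding hamming_def by simp
qed

lemma hamming_less_1:
  assumes "i < n" and "xs ! i = ys ! i"
  shows "hamming n xs ys < 1"
proof -
  have "card {i. i < n \<and> xs ! i \<noteq> ys ! i} \<le> card ({..<n} - {i})"
    by (rule card_mono) (use assms in auto)
  then show ?thesis
    using assms unfolding hamming_def by simp
qed

lemma transport_cost_nonneg:
  "coupling n mu nu lam \<Longrightarrow> 0 \<le> transport_cost n lam"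
  unfolding transport_cost_def
  by (intro sum_nonneg mult_nonneg_nonneg coupling_nonneg hamming_nonneg)

lemma transport_cost_le_1:
  assumes "coupling n mu nu lam"
  shows "transport_cost n lam \<le> 1"
proof -
  have "transport_cost n lam \<le> sum lam (words n \<times> words n)"
    unfolding transport_cost_def
    using coupling_nonneg[OF assms] hamming_nonneg hamming_le_1
    by (intro sum_mono mult_right_le_one_le) auto
  then show ?thesis
    using coupling_sum_eq_1[OF assms] by simp
qed

definition hamming_kernel :: "real \<Rightarrow> 'a::finite \<Rightarrow> 'a \<Rightarrow> real" where
  "hamming_kernel c a b = (if a = b then 1 - c else c / real CARD('a))"

lemma hamming_kernel_commute: "hamming_kernel c a b = hamming_kernel c b a"
  unfolding hamming_kernel_def by auto

lemma hamming_kernel_nonneg: "0 \<le> c \<Longrightarrow> c \<le> 1 \<Longrightarrow> 0 \<le> hamming_kernel c a b"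
  unfolding hamming_kernel_def by auto

lemma sum_hamming_kernel_le_1:
  fixes a :: "'a::finite"
  assumes "0 \<le> c"
  shows "(\<Sum>b\<in>UNIV. hamming_kernel c a b) \<le> 1"
proof -
  have "(\<Sum>b\<in>UNIV. hamming_kernel c a b) = hamming_kernel c a a + (\<Sum>b\<in>UNIV - {a}. hamming_kernel c a b)"
    by (rule sum.remove) simp_all
  also have "\<dots> = (1 - c) + (\<Sum>b\<in>UNIV - {a}. c / real CARD('a))"
    by (simp add: hamming_kernel_def)
  also have "\<dots> = 1 - c / real CARD('a)"
    by (simp add: card_Diff_subset field_simps)
  finally show ?thesis
    using assms by simp
qed

lemma sum_prod_hamming_kernel_le_1:
  fixes xs :: "'a::finite list"
  assumes "0 \<le> c" and "c \<le> 1"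
  shows "(\<Sum>ys\<in>words n. \<Prod>i<n. hamming_kernel c (xs ! i) (ys ! i)) \<le> 1"
  using sum_words_prod[of "\<lambda>i. hamming_kernel c (xs ! i)" n] assms
  by (simp add: prod_le_1 sum_nonneg hamming_kernel_nonneg sum_hamming_kernel_le_1)

lemma sum_ln_hamming_kernel:
  fixes xs ys :: "'a::finite list"
  assumes "0 < n"
  shows "(\<Sum>i<n. ln (hamming_kernel c (xs ! i) (ys ! i)))
    = real n * ((1 - hamming n xs ys) * ln (1 - c) + hamming n xs ys * ln (c / real CARD('a)))"
proof -
  let ?D = "{i. i < n \<and> xs ! i \<noteq> ys ! i}"
  have "(\<Sum>i<n. ln (hamming_kernel c (xs ! i) (ys ! i)))
      = (\<Sum>i<n. ln (1 - c) + (if i \<in> ?D then ln (c / real CARD('a)) - ln (1 - c) else 0))"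
    by (intro sum.cong) (auto simp: hamming_kernel_def)
  also have "\<dots> = real n * ln (1 - c) + real (card ?D) * (ln (c / real CARD('a)) - ln (1 - c))"
    by (simp add: sum.distrib sum.If_cases lessThan_def Collect_conj_eq)
  also have "real (card ?D) = real n * hamming n xs ys"
    using assms unfolding hamming_def by simp
  finally show ?thesis
    by (simp add: algebra_simps)
qed

locale iid_coupling =
  fixes n :: nat and nu :: "'a::finite \<Rightarrow> real" and mu :: "'a list \<Rightarrow> real"
    and lam :: "'a list \<times> 'a list \<Rightarrow> real"
  assumes nu_dist: "is_dist UNIV nu"
    and coupling: "coupling n mu (iid_power n nu) lam"
    and n_pos: "0 < n"
begin

abbreviation cost :: real where
  "cost \<equiv> transport_cost n lam"

abbreviation kernel :: "'a \<Rightarrow> 'a \<Rightarrow> real" where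
  "kernel \<equiv> hamming_kernel cost"

lemma lam_nonneg: "w \<in> words n \<times> words n \<Longrightarrow> 0 \<le> lam w"
  using coupling by (rule coupling_nonneg)

lemma kernel_nonneg: "0 \<le> kernel a b"
  using transport_cost_nonneg[OF coupling] transport_cost_le_1[OF coupling]
  by (rule hamming_kernel_nonneg)

text \<open>A pair of positive mass forces \<open>c > 0\<close> where its letters differ and \<open>c < 1\<close> where they agree.\<close>

lemma kernel_pos:
  assumes w: "w \<in> words n \<times> words n" and "0 < lam w" and "i < n"
  shows "0 < kernel (fst w ! i) (snd w ! i)"
proof (cases "fst w ! i = snd w ! i")
  case True
  have "0 < lam w * (1 - hamming n (fst w) (snd w))"
    using assms(2) hamming_less_1[OF assms(3) True] by simp
  also have "\<dots> \<le> (\<Sum>v\<in>words n \<times> words n. lam v * (1 - hamming n (fst v) (snd v)))"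
    by (rule member_le_sum) (use w in \<open>auto intro!: mult_nonneg_nonneg lam_nonneg simp: hamming_le_1\<close>)
  also have "\<dots> = 1 - cost"
    using coupling_sum_eq_1[OF coupling]
    by (simp add: transport_cost_def right_diff_distrib sum_subtractf)
  finally show ?thesis
    using True by (simp add: hamming_kernel_def)
next
  case False
  have "0 < lam w * hamming n (fst w) (snd w)"
    using assms(2) hamming_pos[OF assms(3) False] by simp
  also have "\<dots> \<le> cost"
    unfolding transport_cost_def
    by (rule member_le_sum) (use w in \<open>auto intro!: mult_nonneg_nonneg lam_nonneg hamming_nonneg\<close>)
  finally show ?thesis
    using False by (simp add: hamming_kernel_def)
qed

lemma expected_ln_kernel:
  "(\<Sum>w\<in>words n \<times> words n. lam w * (\<Sum>i<n. ln (kernel (fst w ! i) (snd w ! i))))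
    = - real n * (binary_entropy cost + cost * ln (real CARD('a)))"
proof -
  define A where "A = ln (1 - cost)"
  define B where "B = ln (cost / real CARD('a))"
  have "lam w * (\<Sum>i<n. ln (kernel (fst w ! i) (snd w ! i)))
      = real n * A * lam w + real n * (B - A) * (lam w * hamming n (fst w) (snd w))" for w
    unfolding sum_ln_hamming_kernel[OF n_pos] A_def B_def by (simp add: algebra_simps)
  then have "(\<Sum>w\<in>words n \<times> words n. lam w * (\<Sum>i<n. ln (kernel (fst w ! i) (snd w ! i))))
      = real n * A * sum lam (words n \<times> words n) + real n * (B - A) * cost"
    by (simp add: sum.distrib sum_distrib_left transport_cost_def)
  also have "\<dots> = real n * ((1 - cost) * A + cost * B)"
    using coupling_sum_eq_1[OF coupling] by (simp add: algebra_simps)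
  also have "cost * B = cost * ln cost - cost * ln (real CARD('a))"
    using transport_cost_nonneg[OF coupling]
    by (cases "cost = 0") (simp_all add: B_def ln_div right_diff_distrib)
  finally show ?thesis
    by (simp add: A_def binary_entropy_def algebra_simps)
qed

lemma sum_entropy_marginals_le:
  "(\<Sum>i<n. entropy UNIV (marginal n mu i))
    \<le> real n * entropy UNIV nu
      - (\<Sum>w\<in>words n \<times> words n. lam w * (\<Sum>i<n. ln (kernel (fst w ! i) (snd w ! i))))"
proof -
  have "entropy UNIV (marginal n mu i)
      \<le> entropy UNIV nu - (\<Sum>w\<in>words n \<times> words n. lam w * ln (kernel (snd w ! i) (fst w ! i)))"
    if i: "i < n" for i
  proof (rule entropy_le_entropy_minus_log_kernel)
    show "nu a = (\<Sum>w\<in>{w\<in>words n \<times> words n. snd w ! i = a}. lam w)" for a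
      using coupling_sum_snd[OF coupling, of "\<lambda>ys. ys ! i = a"] marginal_iid_power[OF nu_dist i, of a]
      by (simp add: marginal_def)
    show "marginal n mu i a = (\<Sum>w\<in>{w\<in>words n \<times> words n. fst w ! i = a}. lam w)" for a
      using coupling_sum_fst[OF coupling, of "\<lambda>xs. xs ! i = a"] by (simp add: marginal_def)
    show "0 < kernel (snd w ! i) (fst w ! i)" if "w \<in> words n \<times> words n" "0 < lam w" for w
      using kernel_pos[OF that i] by (simp add: hamming_kernel_commute)
  qed (use lam_nonneg coupling_sum_eq_1[OF coupling] kernel_nonneg
         sum_hamming_kernel_le_1 transport_cost_nonneg[OF coupling] in auto)
  then have "(\<Sum>i<n. entropy UNIV (marginal n mu i))
      \<le> (\<Sum>i<n. entropy UNIV nu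
            - (\<Sum>w\<in>words n \<times> words n. lam w * ln (kernel (fst w ! i) (snd w ! i))))"
    by (intro sum_mono) (simp add: hamming_kernel_commute)
  then show ?thesis
    by (simp add: sum_subtractf sum_distrib_left sum.swap[of _ "{..<n}"])
qed

lemma entropy_iid_power_le:
  "real n * entropy UNIV nu
    \<le> entropy (words n) mu
      - (\<Sum>w\<in>words n \<times> words n. lam w * (\<Sum>i<n. ln (kernel (fst w ! i) (snd w ! i))))"
proof -
  let ?q = "\<lambda>xs ys. \<Prod>i<n. kernel (xs ! i) (ys ! i)"
  have "entropy (words n) (iid_power n nu)
      \<le> entropy (words n) mu - (\<Sum>w\<in>words n \<times> words n. lam w * ln (?q (fst w) (snd w)))"
  proof (rule entropy_le_entropy_minus_log_kernel)
    show "mu xs = (\<Sum>w\<in>{w\<in>words n \<times> words n. fst w = xs}. lam w)" if "xs \<in> words n" for xs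
    proof -
      have "{xs'\<in>words n. xs' = xs} = {xs}"
        using that by auto
      then show ?thesis
        using coupling_sum_fst[OF coupling, of "\<lambda>xs'. xs' = xs"] by simp
    qed
    show "iid_power n nu ys = (\<Sum>w\<in>{w\<in>words n \<times> words n. snd w = ys}. lam w)"
      if "ys \<in> words n" for ys
    proof -
      have "{ys'\<in>words n. ys' = ys} = {ys}"
        using that by auto
      then show ?thesis
        using coupling_sum_snd[OF coupling, of "\<lambda>ys'. ys' = ys"] by simp
    qed
    show "0 < ?q (fst w) (snd w)" if "w \<in> words n \<times> words n" "0 < lam w" for w
      using kernel_pos[OF that] by (intro prod_pos) simp
  qed (use lam_nonneg coupling_sum_eq_1[OF coupling] kernel_nonneg
         sum_prod_hamming_kernel_le_1 transport_cost_nonneg[OF coupling]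
         transport_cost_le_1[OF coupling] in \<open>auto intro: prod_nonneg\<close>)
  also have "(\<Sum>w\<in>words n \<times> words n. lam w * ln (?q (fst w) (snd w)))
      = (\<Sum>w\<in>words n \<times> words n. lam w * (\<Sum>i<n. ln (kernel (fst w ! i) (snd w ! i))))"
  proof (rule sum.cong[OF refl])
    fix w :: "'a list \<times> 'a list"
    assume w: "w \<in> words n \<times> words n"
    show "lam w * ln (?q (fst w) (snd w)) = lam w * (\<Sum>i<n. ln (kernel (fst w ! i) (snd w ! i)))"
    proof (cases "lam w = 0")
      case False
      then have "0 < lam w"
        using lam_nonneg[OF w] by simp
      then show ?thesis
        using kernel_pos[OF w] by (subst ln_prod) (auto simp: less_le)
    qed simp
  qed
  finally show ?thesis
    using entropy_iid_power[OF nu_dist] by simp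
qed

lemma total_correlation_le:
  "total_correlation n mu \<le> 2 * (binary_entropy cost + cost * ln (real CARD('a))) * real n"
proof -
  let ?E = "\<Sum>w\<in>words n \<times> words n. lam w * (\<Sum>i<n. ln (kernel (fst w ! i) (snd w ! i)))"
  have "total_correlation n mu \<le> - 2 * ?E"
    using sum_entropy_marginals_le entropy_iid_power_le unfolding total_correlation_def by linarith
  then show ?thesis
    unfolding expected_ln_kernel by (simp add: algebra_simps)
qed

end

lemma continuous_on_mult_ln: "continuous_on {0..} (\<lambda>x::real. x * ln x)"
proof (clarsimp simp: continuous_on_eq_continuous_within)
  fix x :: real
  assume "0 \<le> x"
  show "continuous (at x within {0..}) (\<lambda>x. x * ln x)"
  proof (cases "x = 0")
    case True
    have "((\<lambda>x::real. x * ln x) \<longlongrightarrow> 0) (at_right 0)"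
      by real_asymp
    then show ?thesis
      using True by (simp add: continuous_within at_within_Ici_at_right)
  next
    case False
    then have "isCont (\<lambda>x. x * ln x) x"
      by (intro continuous_mult continuous_ident isCont_ln)
    then show ?thesis
      by (rule continuous_at_imp_continuous_within)
  qed
qed

lemma continuous_on_binary_entropy: "continuous_on {0..1} binary_entropy"
proof -
  have "binary_entropy = (\<lambda>d. - (d * ln d) - (1 - d) * ln (1 - d))"
    by (simp add: fun_eq_iff binary_entropy_def)
  moreover have "continuous_on {0..1} (\<lambda>d::real. d * ln d)"
    by (rule continuous_on_subset[OF continuous_on_mult_ln]) auto
  moreover have "continuous_on {0..1} (\<lambda>d::real. (1 - d) * ln (1 - d))"
    by (rule continuous_on_compose2[OF continuous_on_mult_ln, of _ "\<lambda>d. 1 - d"])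
      (auto intro: continuous_on_diff continuous_on_const continuous_on_id)
  ultimately show ?thesis
    by (metis continuous_on_diff continuous_on_minus)
qed

lemma le_at_Inf_of_continuous:
  fixes F :: "real \<Rightarrow> real"
  assumes F: "continuous_on {a..b} F" and "C \<noteq> {}" and C: "C \<subseteq> {a..b}"
    and bound: "\<And>c. c \<in> C \<Longrightarrow> t \<le> F c"
  shows "t \<le> F (Inf C)"
proof -
  have "bdd_below C"
    using C by (meson bdd_below_Icc bdd_below_mono)
  with \<open>C \<noteq> {}\<close> have "Inf C \<in> closure C"
    by (rule closure_contains_Inf)
  also have "closure C \<subseteq> {c \<in> {a..b}. t \<le> F c}"
    using C bound
    by (intro closure_minimal continuous_on_closed_Collect_le[OF continuous_on_const F]) auto
  finally show ?thesis
    by simp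
qed

lemma total_correlation_0:
  fixes mu :: "'a::finite list \<Rightarrow> real"
  assumes "is_dist (words 0) mu"
  shows "total_correlation 0 mu = 0"
proof -
  have "words 0 = {[] :: 'a list}"
    unfolding words_def by auto
  with assms show ?thesis
    unfolding total_correlation_def entropy_def is_dist_def by simp
qed

theorem lemma4p4:
  fixes nu :: "'a::finite \<Rightarrow> real" and mu :: "'a list \<Rightarrow> real" and n :: nat
  assumes "is_dist UNIV nu" and "is_dist (words n) mu"
  shows "let \<delta> = dbar n mu (iid_power n nu) in
         total_correlation n mu \<le> 2 * (binary_entropy \<delta> + \<delta> * ln (real CARD('a))) * real n"
proof (cases "n = 0")
  case True
  then show ?thesis
    using total_correlation_0[OF assms(2)[unfolded True]] by (simp add: Let_def)
next
  case False
  then have n_pos: "0 < n"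
    by simp
  let ?C = "{transport_cost n lam | lam. coupling n mu (iid_power n nu) lam}"
  have "dbar n mu (iid_power n nu) = Inf ?C"
    unfolding dbar_def transport_cost_def ..
  moreover have "total_correlation n mu
      \<le> 2 * (binary_entropy (Inf ?C) + Inf ?C * ln (real CARD('a))) * real n"
  proof (rule le_at_Inf_of_continuous)
    show "continuous_on {0..1} (\<lambda>c. 2 * (binary_entropy c + c * ln (real CARD('a))) * real n)"
      by (intro continuous_on_mult continuous_on_add continuous_on_const continuous_on_id
          continuous_on_binary_entropy)
    show "?C \<noteq> {}"
      using coupling_product[OF assms(2) is_dist_iid_power[OF assms(1)]] by blast
    show "?C \<subseteq> {0..1}"
      using transport_cost_nonneg transport_cost_le_1 by auto
    show "total_correlation n mu \<le> 2 * (binary_entropy c + c * ln (real CARD('a))) * real n"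
      if "c \<in> ?C" for c
      using that iid_coupling.total_correlation_le[OF iid_coupling.intro[OF assms(1) _ n_pos]]
      by blast
  qed
  ultimately show ?thesis
    by (simp add: Let_def)
qed

end
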